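(* Let $d\in\mathbb N_+$. If $f\in\bigcap_{{\bf m}\in\mathbb N_+^d}W_2^{\bf m}(\mathbb T^d)$ satisfies $\sup_{{\bf m}\in\mathbb N_+^d}\|f|W_2^{\bf m}(\mathbb T^d)\|<\infty$, then $\hat f({\bf k})=0$ for every ${\bf k}\in\mathbb Z^d$ with $|k_i|\ge2$ for some $i$, and $\sup_{{\bf m}\in\mathbb N_+^d}\|f|W_2^{\bf m}(\mathbb T^d)\|^2=\sum_{{\bf k}\in\{-1,0,1\}^d}(1+\sum_{j=1}^d|k_j|)|\hat f({\bf k})|^2$. Consequently the space $W_2^\infty(\mathbb T^d)$ of all such $f$ is a Hilbert space of dimension $3^d$.
   Context: $\mathbb T^d$ carries the normalized Lebesgue measure and $\hat f({\bf k})=(2\pi)^{-d}\int_{\mathbb T^d}f({\bf x})e^{-i{\bf k}\cdot{\bf x}}d{\bf x}$. For ${\bf m}\in\mathbb N_+^d$, $W_2^{\bf m}(\mathbb T^d)$ is the space of $f\in L_2(\mathbb T^d)$ with finite norm $\|f|W_2^{\bf m}(\mathbb T^d)\|=\big(\sum_{{\bf k}\in\mathbb Z^d}(1+\sum_{j=1}^d|k_j|^{2m_j})|\hat f({\bf k})|^2\big)^{1/2}$. *)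

theory Defs
  imports "HOL-Analysis.Analysis"
begin

text \<open>The torus T^d is represented by the fundamental cube [0, 2 pi]^d in real^'d,
  where the dimension d = CARD('d) is given by a finite index type 'd.
  Functions on T^d are functions real^'d => complex (only their values on the cube matter).\<close>

definition torus :: "(real^'d::finite) set" where
  "torus = cbox 0 (\<chi> i. 2 * pi)"

definition dotk :: "int^'d::finite \<Rightarrow> real^'d \<Rightarrow> real" where
  "dotk k x = (\<Sum>j\<in>UNIV. of_int (k $ j) * x $ j)"

definition L2T :: "(real^'d::finite \<Rightarrow> complex) \<Rightarrow> bool" where
  "L2T f \<longleftrightarrow> f \<in> borel_measurable (lebesgue_on torus) \<and>
     integrable (lebesgue_on torus) (\<lambda>x. (cmod (f x))^2)"

definition fourier :: "(real^'d::finite \<Rightarrow> complex) \<Rightarrow> int^'d \<Rightarrow> complex" where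
  "fourier f k = complex_of_real (1 / (2 * pi) ^ CARD('d)) *
     (LINT x|lebesgue_on torus. f x * exp (- \<i> * complex_of_real (dotk k x)))"

definition sob_weight :: "nat^'d::finite \<Rightarrow> int^'d \<Rightarrow> real" where
  "sob_weight m k = 1 + (\<Sum>j\<in>UNIV. \<bar>real_of_int (k $ j)\<bar> ^ (2 * m $ j))"

definition posidx :: "(nat^'d::finite) set" where
  "posidx = {m. \<forall>j. m $ j \<ge> 1}"

definition inW2 :: "nat^'d::finite \<Rightarrow> (real^'d \<Rightarrow> complex) \<Rightarrow> bool" where
  "inW2 m f \<longleftrightarrow> L2T f \<and> (\<lambda>k. sob_weight m k * (cmod (fourier f k))^2) summable_on UNIV"

definition sob_norm :: "nat^'d::finite \<Rightarrow> (real^'d \<Rightarrow> complex) \<Rightarrow> real" where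
  "sob_norm m f = sqrt (\<Sum>\<^sub>\<infinity>k. sob_weight m k * (cmod (fourier f k))^2)"

definition inW2inf :: "(real^'d::finite \<Rightarrow> complex) \<Rightarrow> bool" where
  "inW2inf f \<longleftrightarrow> (\<forall>m\<in>(posidx :: (nat^'d) set). inW2 m f) \<and>
     bdd_above ((\<lambda>m. sob_norm m f) ` (posidx :: (nat^'d) set))"

definition lowfreq :: "(int^'d::finite) set" where
  "lowfreq = {k. \<forall>j. \<bar>k $ j\<bar> \<le> 1}"

end

(*
  On a frequency k with |k_i| >= 2 the weight of W_2^m with m = (M,...,M) is at least 4^M >= M, so a
  uniform bound B on the norms forces |f^(k)|^2 <= B^2 / M for all M, i.e. f^(k) = 0.  On the cube
  {-1,0,1}^d one has |k_j|^(2 m_j) = |k_j| for every m in N_+^d, so all the norms coincide with the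
  weighted l^2-norm of the 3^d remaining coefficients.  Every choice of these coefficients is realised
  by a trigonometric polynomial, and they determine f up to a null set by uniqueness of Fourier
  coefficients: an integrable h orthogonal to all characters is orthogonal, by Stone-Weierstrass, to
  every continuous function of (cos (x_j - mu_j))_j.  Ramps in these cosines converge to indicators of
  boxes inside the cube, so all box integrals of h vanish, hence (Dynkin) all set integrals, and h = 0
  almost everywhere.
*)

theory Submission
  imports Defs
begin

definition torus_char :: "int^'d::finite \<Rightarrow> real^'d \<Rightarrow> complex" where
  "torus_char k x = exp (\<i> * complex_of_real (dotk k x))"

abbreviation torus_measure :: "(real^'d::finite) measure" where
  "torus_measure \<equiv> lebesgue_on torus"

lemma dotk_add: "dotk (k + l) x = dotk k x + dotk l x"
  by (simp add: dotk_def sum.distrib algebra_simps)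

lemma dotk_uminus: "dotk (- k) x = - dotk k x"
  by (simp add: dotk_def sum_negf)

lemma dotk_zero [simp]: "dotk 0 x = 0"
  by (simp add: dotk_def)

lemma dotk_axis: "dotk (axis j 1) x = x $ j"
proof -
  have "dotk (axis j 1) x = (\<Sum>i\<in>UNIV. if i = j then x $ j else 0)"
    unfolding dotk_def by (intro sum.cong) (auto simp: axis_def)
  then show ?thesis by simp
qed

lemma continuous_on_dotk [continuous_intros]: "continuous_on S (dotk k)"
  unfolding dotk_def by (intro continuous_intros)

lemma torus_char_add: "torus_char (k + l) x = torus_char k x * torus_char l x"
  by (simp add: torus_char_def dotk_add distrib_left exp_add)

lemma torus_char_zero [simp]: "torus_char 0 x = 1"
  by (simp add: torus_char_def)

lemma norm_torus_char [simp]: "norm (torus_char k x) = 1"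
  by (simp add: torus_char_def)

lemma continuous_on_torus_char [continuous_intros]: "continuous_on S (torus_char k)"
  unfolding torus_char_def by (intro continuous_intros)

lemma fourier_conv_torus_char:
  "fourier f k = complex_of_real (1 / (2 * pi) ^ CARD('d)) * (LINT x|torus_measure. f x * torus_char (- k) x)"
  for f :: "real^'d::finite \<Rightarrow> complex"
  by (simp add: fourier_def torus_char_def dotk_uminus)

lemma torus_lmeasurable: "torus \<in> lmeasurable"
  by (simp add: torus_def)

lemma sets_lebesgue_torus [simp]: "torus \<in> sets lebesgue"
  using torus_lmeasurable by (rule fmeasurableD)

lemma finite_measure_torus: "finite_measure torus_measure"
  by (rule finite_measure_lebesgue_on[OF torus_lmeasurable])

lemma borel_measurable_lebesgue_on_borel:
  "f \<in> borel_measurable borel \<Longrightarrow> f \<in> borel_measurable (lebesgue_on S)"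
  by (simp add: measurable_completion measurable_restrict_space1)

lemma borel_measurable_indicator_scaleR_lebesgue_on:
  fixes f :: "'a::euclidean_space \<Rightarrow> 'b::{second_countable_topology, real_normed_vector}"
  assumes "A \<in> sets borel" "f \<in> borel_measurable (lebesgue_on S)"
  shows "(\<lambda>x. indicator A x *\<^sub>R f x) \<in> borel_measurable (lebesgue_on S)"
proof -
  have "indicator A \<in> borel_measurable (lebesgue_on S)"
    using assms(1) by (intro borel_measurable_lebesgue_on_borel borel_measurable_indicator)
  then show ?thesis
    using assms(2) by (rule borel_measurable_scaleR)
qed

lemma borel_measurable_torus_continuous:
  "continuous_on UNIV f \<Longrightarrow> f \<in> borel_measurable torus_measure"
  by (intro borel_measurable_lebesgue_on_borel borel_measurable_continuous_onI)

lemma mem_torus_iff: "x \<in> torus \<longleftrightarrow> (\<forall>j. 0 \<le> x $ j \<and> x $ j \<le> 2 * pi)"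
  by (simp add: torus_def mem_box_cart)

lemma (in finite_measure) integrable_if_square_integrable:
  fixes f :: "'a \<Rightarrow> 'b::{banach, second_countable_topology}"
  assumes "f \<in> borel_measurable M" "integrable M (\<lambda>x. (norm (f x))\<^sup>2)"
  shows "integrable M f"
proof (rule Bochner_Integration.integrable_bound[where f="\<lambda>x. 1 + (norm (f x))\<^sup>2"])
  show "integrable M (\<lambda>x. 1 + (norm (f x))\<^sup>2)"
    using assms(2) by (intro Bochner_Integration.integrable_add integrable_const)
  have "t \<le> 1 + t\<^sup>2" if "0 \<le> t" for t :: real
    using that zero_le_power2[of "t - 1"] by (simp add: power2_eq_square algebra_simps)
  then have "norm (f x) \<le> 1 + (norm (f x))\<^sup>2" for x
    by simp
  then show "AE x in M. norm (f x) \<le> norm (1 + (norm (f x))\<^sup>2)"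
    by (intro AE_I2) simp
qed fact

lemma integrable_mult_bounded:
  fixes f g :: "'a \<Rightarrow> 'b::{real_normed_field, banach, second_countable_topology}"
  assumes "integrable M f" "g \<in> borel_measurable M" "\<And>x. norm (g x) \<le> B"
  shows "integrable M (\<lambda>x. f x * g x)"
proof (rule Bochner_Integration.integrable_bound[where f="\<lambda>x. B * norm (f x)"])
  show "integrable M (\<lambda>x. B * norm (f x))"
    using assms(1) by (intro integrable_mult_right integrable_norm)
  show "(\<lambda>x. f x * g x) \<in> borel_measurable M"
    by (intro borel_measurable_times borel_measurable_integrable[OF assms(1)] assms(2))
  have "0 \<le> B" using assms(3) norm_ge_zero order_trans by blast
  then show "AE x in M. norm (f x * g x) \<le> norm (B * norm (f x))"
    by (intro AE_I2) (simp add: norm_mult mult.commute[of B] mult_left_mono[OF assms(3)])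
qed

lemma L2T_imp_integrable: "L2T f \<Longrightarrow> integrable torus_measure f"
  unfolding L2T_def by (blast intro: finite_measure.integrable_if_square_integrable[OF finite_measure_torus])

lemma integrable_mult_torus_char:
  "integrable torus_measure f \<Longrightarrow> integrable torus_measure (\<lambda>x. f x * torus_char k x)"
  by (rule integrable_mult_bounded[where B=1])
     (auto intro: borel_measurable_torus_continuous continuous_on_torus_char)

section \<open>Orthogonality of the characters\<close>

lemma integral_lborel_prod:
  fixes f :: "'a::euclidean_space \<Rightarrow> real \<Rightarrow> complex"
  assumes [measurable]: "\<And>b. b \<in> Basis \<Longrightarrow> f b \<in> borel_measurable borel"
  assumes int: "\<And>b. b \<in> Basis \<Longrightarrow> integrable lborel (f b)"
  shows "(\<integral>x. (\<Prod>b\<in>Basis. f b (x \<bullet> b)) \<partial>lborel) = (\<Prod>b\<in>Basis. integral\<^sup>L lborel (f b))"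
proof -
  interpret product_sigma_finite "\<lambda>_. lborel"
    by unfold_locales
  have "(\<integral>x. (\<Prod>b\<in>Basis. f b (x \<bullet> b)) \<partial>lborel) =
     (\<integral>x. (\<Prod>b\<in>Basis. f b ((\<Sum>b'\<in>Basis. x b' *\<^sub>R b') \<bullet> b)) \<partial>(\<Pi>\<^sub>M b\<in>Basis. lborel))"
    by (subst lborel_eq) (simp add: integral_distr)
  also have "\<dots> = (\<integral>x. (\<Prod>b\<in>Basis. f b (x b)) \<partial>(\<Pi>\<^sub>M b\<in>Basis. lborel))"
    by (intro Bochner_Integration.integral_cong refl prod.cong)
       (simp_all add: inner_sum_left inner_Basis if_distrib cong: if_cong)
  also have "\<dots> = (\<Prod>b\<in>Basis. integral\<^sup>L lborel (f b))"
    by (rule product_integral_prod) (auto intro: int)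
  finally show ?thesis .
qed

lemma integral_exp_imult_period:
  fixes n :: int
  shows "(LBINT t. indicator {0..2*pi} t *\<^sub>R exp (t *\<^sub>R (\<i> * of_int n))) = (if n = 0 then 2 * pi else 0)"
proof (cases "n = 0")
  case True
  have "(LBINT t. indicator {0..2*pi} t *\<^sub>R (1::complex)) = of_real (2*pi) - of_real 0"
    by (rule integral_FTC_atLeastAtMost) (auto intro!: derivative_eq_intros)
  then show ?thesis using True by simp
next
  case False
  let ?A = "\<i> * of_int n :: complex"
  have "(LBINT t. indicator {0..2*pi} t *\<^sub>R exp (t *\<^sub>R ?A)) =
        exp ((2*pi) *\<^sub>R ?A) / ?A - exp (0 *\<^sub>R ?A) / ?A"
  proof (rule integral_FTC_atLeastAtMost)
    fix x
    show "((\<lambda>t. exp (t *\<^sub>R ?A) / ?A) has_vector_derivative exp (x *\<^sub>R ?A)) (at x within {0..2*pi})"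
      using has_vector_derivative_divide[OF exp_scaleR_has_vector_derivative_right[of ?A x "{0..2*pi}"], of ?A] False
      by simp
  next
    show "continuous_on {0..2*pi} (\<lambda>t. exp (t *\<^sub>R ?A))"
      by (intro continuous_intros)
  qed simp
  also have "exp ((2*pi) *\<^sub>R ?A) = 1"
    by (simp add: exp_eq_1 scaleR_conv_of_real mult_ac)
  finally show ?thesis using False by simp
qed

lemma prod_Basis_vec: "(\<Prod>b\<in>(Basis::(real^'n) set). g b) = (\<Prod>j\<in>UNIV. g (axis j 1))"
proof -
  have Basis: "(Basis :: (real^'n) set) = range (\<lambda>j. axis j 1)" by (auto simp: Basis_vec_def)
  have "inj (\<lambda>j::'n. axis j (1::real))" by (auto intro: injI simp: axis_eq_axis)
  then show ?thesis unfolding Basis by (simp add: prod.reindex)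
qed

lemma indicator_torus_eq_prod: "indicator torus x = (\<Prod>j\<in>UNIV. indicator {0..2*pi} (x $ j) :: real)"
proof (cases "x \<in> torus")
  case False
  then obtain j where "x $ j \<notin> {0..2*pi}" by (auto simp: mem_torus_iff)
  then have "(\<Prod>j\<in>UNIV. indicator {0..2*pi} (x $ j) :: real) = 0"
    by (intro prod_zero bexI[of _ j]) simp_all
  then show ?thesis using False by simp
qed (auto simp: mem_torus_iff)

lemma integral_torus_char:
  "(LINT x|torus_measure. torus_char n x) = (if n = 0 then (2*pi)^CARD('d) else 0)"
  for n :: "int^'d::finite"
proof -
  define F where "F b t = indicator {0..2*pi} t *\<^sub>R exp (t *\<^sub>R (\<i> * of_int (n $ axis_index b)))"
    for b :: "real^'d" and t :: real
  have F_meas: "F b \<in> borel_measurable borel" for b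
    unfolding F_def[abs_def] by (intro borel_measurable_scaleR borel_measurable_indicator borel_measurable_continuous_onI continuous_intros) simp
  have F_int: "integrable lborel (F b)" for b
  proof -
    have "set_integrable lborel {0..2*pi} (\<lambda>t. exp (t *\<^sub>R (\<i> * complex_of_int (n $ axis_index b))))"
      by (intro borel_integrable_atLeastAtMost' continuous_intros)
    then show ?thesis unfolding F_def[abs_def] set_integrable_def .
  qed
  have product: "indicator torus x *\<^sub>R torus_char n x = (\<Prod>b\<in>Basis. F b (x \<bullet> b))" for x
    by (simp add: prod_Basis_vec inner_axis F_def torus_char_def dotk_def indicator_torus_eq_prod
        scaleR_conv_of_real prod.distrib exp_sum sum_distrib_left mult_ac)
  have "(LINT x|torus_measure. torus_char n x) = (LINT x|lebesgue. indicator torus x *\<^sub>R torus_char n x)"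
    by (rule integral_restrict_space) simp
  also have "\<dots> = (LINT x|lborel. indicator torus x *\<^sub>R torus_char n x)"
    by (intro integral_completion borel_measurable_scaleR borel_measurable_indicator)
       (auto simp: torus_def intro: borel_measurable_continuous_onI continuous_on_torus_char)
  also have "\<dots> = (\<Prod>b\<in>Basis. integral\<^sup>L lborel (F b))"
    unfolding product by (intro integral_lborel_prod F_meas F_int)
  also have "\<dots> = (\<Prod>j\<in>UNIV. complex_of_real (if n $ j = 0 then 2*pi else 0))"
    by (simp add: prod_Basis_vec F_def[abs_def] integral_exp_imult_period)
  also have "\<dots> = (if n = 0 then (2*pi)^CARD('d) else 0)"
    by (auto simp: vec_eq_iff intro: prod_zero)
  finally show ?thesis .
qed

section \<open>Functions in all spaces W_2^m\<close>

lemma not_lowfreq_iff: "k \<notin> lowfreq \<longleftrightarrow> (\<exists>i. \<bar>k $ i\<bar> \<ge> 2)"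
proof -
  have "\<not> \<bar>x\<bar> \<le> 1 \<longleftrightarrow> \<bar>x\<bar> \<ge> 2" for x :: int by arith
  then show ?thesis by (auto simp: lowfreq_def)
qed

lemma lowfreq_bij_betw: "bij_betw vec_nth (lowfreq :: (int^'d::finite) set) (Pi\<^sub>E UNIV (\<lambda>_. {-1..1}))"
proof (rule bij_betwI')
  show "\<exists>x\<in>lowfreq. y = vec_nth x" if "y \<in> Pi\<^sub>E UNIV (\<lambda>_. {-1..1::int})" for y
    using that by (intro bexI[of _ "vec_lambda y"]) (auto simp: lowfreq_def abs_le_iff)
qed (auto simp: vec_nth_inject lowfreq_def abs_le_iff)

lemma card_lowfreq: "card (lowfreq :: (int^'d::finite) set) = 3 ^ CARD('d)"
  using bij_betw_same_card[OF lowfreq_bij_betw] by (simp add: card_PiE)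

lemma finite_lowfreq [simp]: "finite (lowfreq :: (int^'d::finite) set)"
  using bij_betw_finite[OF lowfreq_bij_betw] by (simp add: finite_PiE)

lemma sob_weight_nonneg: "0 \<le> sob_weight m k"
  unfolding sob_weight_def by (intro add_nonneg_nonneg sum_nonneg) auto

lemma sob_weight_lowfreq:
  assumes "m \<in> posidx" "k \<in> lowfreq"
  shows "sob_weight m k = 1 + (\<Sum>j\<in>UNIV. real_of_int \<bar>k $ j\<bar>)"
  unfolding sob_weight_def
proof (intro arg_cong[where f="\<lambda>x. 1 + x"] sum.cong refl)
  fix j
  have "\<bar>k $ j\<bar> \<le> 1" and "m $ j \<ge> 1"
    using assms by (auto simp: lowfreq_def posidx_def)
  then have "\<bar>k $ j\<bar> = 0 \<or> \<bar>k $ j\<bar> = 1" and "m $ j \<noteq> 0"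
    by auto
  then show "\<bar>real_of_int (k $ j)\<bar> ^ (2 * m $ j) = real_of_int \<bar>k $ j\<bar>"
    by (auto simp flip: of_int_abs)
qed

lemma real_le_sob_weight_const:
  assumes "\<bar>k $ i\<bar> \<ge> 2"
  shows "real M \<le> sob_weight (\<chi> j. M) k"
proof -
  have "real M \<le> 2 ^ M"
    by (metis less_exp less_imp_le of_nat_le_iff of_nat_numeral of_nat_power)
  also have "(2::real) ^ M \<le> 2 ^ (2 * M)"
    by (intro power_increasing) auto
  also have "\<dots> \<le> \<bar>real_of_int (k $ i)\<bar> ^ (2 * M)"
    using assms by (intro power_mono) linarith+
  also have "\<dots> \<le> (\<Sum>j\<in>UNIV. \<bar>real_of_int (k $ j)\<bar> ^ (2 * (\<chi> j. M) $ j))"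
    using member_le_sum[of i UNIV "\<lambda>j. \<bar>real_of_int (k $ j)\<bar> ^ (2 * M)"] by simp
  finally show ?thesis
    unfolding sob_weight_def by linarith
qed

lemma sob_norm_squared: "(sob_norm m f)\<^sup>2 = (\<Sum>\<^sub>\<infinity>k. sob_weight m k * (cmod (fourier f k))\<^sup>2)"
  unfolding sob_norm_def by (auto intro!: real_sqrt_pow2 infsum_nonneg mult_nonneg_nonneg sob_weight_nonneg)

lemma sob_norm_nonneg: "0 \<le> sob_norm m f"
  unfolding sob_norm_def by (auto intro!: infsum_nonneg mult_nonneg_nonneg sob_weight_nonneg)

lemma sob_weight_le_sob_norm:
  assumes "inW2 m f"
  shows "sob_weight m k * (cmod (fourier f k))\<^sup>2 \<le> (sob_norm m f)\<^sup>2"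
proof -
  have summable: "(\<lambda>k. sob_weight m k * (cmod (fourier f k))\<^sup>2) summable_on UNIV"
    using assms by (simp add: inW2_def)
  have "sob_weight m k * (cmod (fourier f k))\<^sup>2 = (\<Sum>\<^sub>\<infinity>l\<in>{k}. sob_weight m l * (cmod (fourier f l))\<^sup>2)"
    by simp
  also have "\<dots> \<le> (\<Sum>\<^sub>\<infinity>l. sob_weight m l * (cmod (fourier f l))\<^sup>2)"
    using summable by (intro infsum_mono_neutral) (auto intro: mult_nonneg_nonneg sob_weight_nonneg)
  finally show ?thesis
    by (simp add: sob_norm_squared)
qed

lemma inW2inf_fourier_eq_0:
  fixes f :: "real^'d::finite \<Rightarrow> complex"
  assumes "inW2inf f" "k \<notin> lowfreq"
  shows "fourier f k = 0"
proof -
  obtain i where i: "\<bar>k $ i\<bar> \<ge> 2"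
    using assms(2) by (auto simp: not_lowfreq_iff)
  obtain B where B: "\<And>m. m \<in> posidx \<Longrightarrow> sob_norm m f \<le> B"
    using assms(1) unfolding inW2inf_def bdd_above_def by auto
  define c where "c = (cmod (fourier f k))\<^sup>2"
  have bound: "real M * c \<le> B\<^sup>2" if "M \<ge> 1" for M
  proof -
    have M: "(\<chi> j. M) \<in> (posidx :: (nat^'d) set)"
      using that by (simp add: posidx_def)
    have "real M * c \<le> sob_weight (\<chi> j. M) k * c"
      unfolding c_def by (intro mult_right_mono real_le_sob_weight_const[OF i]) simp
    also have "\<dots> \<le> (sob_norm (\<chi> j. M) f)\<^sup>2"
      unfolding c_def using assms(1) M by (intro sob_weight_le_sob_norm) (simp add: inW2inf_def)
    also have "\<dots> \<le> B\<^sup>2"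
      using B[OF M] by (intro power_mono sob_norm_nonneg)
    finally show ?thesis .
  qed
  have "c \<le> 0"
  proof (rule ccontr)
    assume "\<not> c \<le> 0"
    define M where "M = nat \<lceil>B\<^sup>2 / c\<rceil> + 1"
    have "B\<^sup>2 / c < real M"
      unfolding M_def by linarith
    with \<open>\<not> c \<le> 0\<close> have "B\<^sup>2 < real M * c"
      by (simp add: field_simps)
    with bound[of M] show False by (simp add: M_def)
  qed
  then show ?thesis by (simp add: c_def)
qed

definition lowfreq_energy :: "(real^'d::finite \<Rightarrow> complex) \<Rightarrow> real" where
  "lowfreq_energy f =
     (\<Sum>k\<in>(lowfreq :: (int^'d) set). (1 + (\<Sum>j\<in>UNIV. real_of_int \<bar>k $ j\<bar>)) * (cmod (fourier f k))\<^sup>2)"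

lemma lowfreq_energy_nonneg: "0 \<le> lowfreq_energy f"
  unfolding lowfreq_energy_def by (intro sum_nonneg mult_nonneg_nonneg add_nonneg_nonneg) auto

lemma summable_sob_weight_if_lowfreq:
  assumes "\<And>k. k \<notin> lowfreq \<Longrightarrow> fourier f k = 0"
  shows "(\<lambda>k. sob_weight m k * (cmod (fourier f k))\<^sup>2) summable_on UNIV"
proof -
  have "(\<lambda>k. sob_weight m k * (cmod (fourier f k))\<^sup>2) summable_on lowfreq"
    by (rule summable_on_finite) simp
  then show ?thesis
    by (rule summable_on_cong_neutral[THEN iffD1, rotated -1]) (auto simp: assms)
qed

lemma sob_norm_if_lowfreq:
  assumes "m \<in> posidx" "\<And>k. k \<notin> lowfreq \<Longrightarrow> fourier f k = 0"
  shows "sob_norm m f = sqrt (lowfreq_energy f)"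
proof -
  have "(\<Sum>\<^sub>\<infinity>k. sob_weight m k * (cmod (fourier f k))\<^sup>2) =
        (\<Sum>\<^sub>\<infinity>k\<in>lowfreq. sob_weight m k * (cmod (fourier f k))\<^sup>2)"
    by (rule infsum_cong_neutral) (auto simp: assms(2))
  also have "\<dots> = lowfreq_energy f"
    by (simp add: lowfreq_energy_def sob_weight_lowfreq[OF assms(1)])
  finally show ?thesis by (simp add: sob_norm_def)
qed

lemma posidx_nonempty: "(\<chi> j. 1) \<in> posidx"
  by (simp add: posidx_def)

lemma inW2inf_iff: "inW2inf f \<longleftrightarrow> L2T f \<and> (\<forall>k. k \<notin> lowfreq \<longrightarrow> fourier f k = 0)"
proof
  assume "inW2inf f"
  then show "L2T f \<and> (\<forall>k. k \<notin> lowfreq \<longrightarrow> fourier f k = 0)"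
    using posidx_nonempty by (auto simp: inW2inf_def inW2_def intro: inW2inf_fourier_eq_0)
next
  assume f: "L2T f \<and> (\<forall>k. k \<notin> lowfreq \<longrightarrow> fourier f k = 0)"
  have "bdd_above ((\<lambda>m. sob_norm m f) ` posidx)"
    by (rule bdd_aboveI[where M="sqrt (lowfreq_energy f)"]) (use f sob_norm_if_lowfreq in force)
  with f show "inW2inf f"
    unfolding inW2inf_def inW2_def by (blast intro: summable_sob_weight_if_lowfreq)
qed

lemma SUP_sob_norm:
  fixes f :: "real^'d::finite \<Rightarrow> complex"
  assumes "inW2inf f"
  shows "(SUP m\<in>posidx. sob_norm m f)\<^sup>2 = lowfreq_energy f"
proof -
  have "(SUP m\<in>posidx. sob_norm m f) = (SUP m\<in>(posidx :: (nat^'d) set). sqrt (lowfreq_energy f))"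
    by (rule SUP_cong[OF refl]) (use assms in \<open>auto simp: inW2inf_iff intro: sob_norm_if_lowfreq\<close>)
  also have "\<dots> = sqrt (lowfreq_energy f)"
    using posidx_nonempty by (intro cSUP_const) auto
  finally show ?thesis
    using lowfreq_energy_nonneg by simp
qed

lemma fourier_add:
  assumes "integrable torus_measure f" "integrable torus_measure g"
  shows "fourier (\<lambda>x. f x + g x) k = fourier f k + fourier g k"
proof -
  have "(LINT x|torus_measure. (f x + g x) * torus_char (-k) x) =
        (LINT x|torus_measure. f x * torus_char (-k) x) + (LINT x|torus_measure. g x * torus_char (-k) x)"
    unfolding distrib_right by (intro Bochner_Integration.integral_add integrable_mult_torus_char assms)
  then show ?thesis by (simp add: fourier_conv_torus_char distrib_left)
qed

lemma fourier_diff: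
  assumes "integrable torus_measure f" "integrable torus_measure g"
  shows "fourier (\<lambda>x. f x - g x) k = fourier f k - fourier g k"
proof -
  have "(LINT x|torus_measure. (f x - g x) * torus_char (-k) x) =
        (LINT x|torus_measure. f x * torus_char (-k) x) - (LINT x|torus_measure. g x * torus_char (-k) x)"
    unfolding left_diff_distrib by (intro Bochner_Integration.integral_diff integrable_mult_torus_char assms)
  then show ?thesis by (simp add: fourier_conv_torus_char right_diff_distrib)
qed

lemma fourier_cmult: "fourier (\<lambda>x. c * f x) k = c * fourier f k"
  by (simp add: fourier_conv_torus_char mult.assoc)

lemma fourier_cong_AE:
  assumes "L2T f" "L2T g" "AE x in torus_measure. f x = g x"
  shows "fourier f k = fourier g k"
proof -
  have "(LINT x|torus_measure. f x * torus_char (-k) x) = (LINT x|torus_measure. g x * torus_char (-k) x)"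
    using assms(3) by (intro integral_cong_AE borel_measurable_times borel_measurable_torus_continuous
        continuous_on_torus_char assms(1,2)[unfolded L2T_def, THEN conjunct1]) auto
  then show ?thesis by (simp add: fourier_conv_torus_char)
qed

lemma norm_add_squared_le: "(norm (a + b))\<^sup>2 \<le> 2 * (norm a)\<^sup>2 + 2 * (norm b)\<^sup>2"
proof -
  have "(norm (a + b))\<^sup>2 \<le> (norm a + norm b)\<^sup>2"
    by (intro power_mono norm_triangle_ineq) simp
  also have "\<dots> \<le> 2 * (norm a)\<^sup>2 + 2 * (norm b)\<^sup>2"
    using zero_le_power2[of "norm a - norm b"] by (simp add: power2_eq_square algebra_simps)
  finally show ?thesis .
qed

lemma L2T_add:
  assumes "L2T f" "L2T g"
  shows "L2T (\<lambda>x. f x + g x)"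
  unfolding L2T_def
proof
  show meas: "(\<lambda>x. f x + g x) \<in> borel_measurable torus_measure"
    using assms by (intro borel_measurable_add) (auto simp: L2T_def)
  show "integrable torus_measure (\<lambda>x. (cmod (f x + g x))\<^sup>2)"
  proof (rule Bochner_Integration.integrable_bound[where f="\<lambda>x. 2 * (cmod (f x))\<^sup>2 + 2 * (cmod (g x))\<^sup>2"])
    show "integrable torus_measure (\<lambda>x. 2 * (cmod (f x))\<^sup>2 + 2 * (cmod (g x))\<^sup>2)"
      using assms unfolding L2T_def by (intro Bochner_Integration.integrable_add integrable_mult_right) auto
    show "(\<lambda>x. (cmod (f x + g x))\<^sup>2) \<in> borel_measurable torus_measure"
      using meas by measurable
    show "AE x in torus_measure. norm ((cmod (f x + g x))\<^sup>2) \<le> norm (2 * (cmod (f x))\<^sup>2 + 2 * (cmod (g x))\<^sup>2)"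
      using norm_add_squared_le by (intro AE_I2) simp
  qed
qed

lemma L2T_cmult:
  assumes "L2T f"
  shows "L2T (\<lambda>x. c * f x)"
  using assms unfolding L2T_def
  by (auto simp: norm_mult power_mult_distrib intro: borel_measurable_times integrable_mult_right)

lemma L2T_continuous:
  assumes "continuous_on UNIV f"
  shows "L2T f"
proof -
  have "continuous_on torus (\<lambda>x. (cmod (f x))\<^sup>2)"
    by (intro continuous_intros continuous_on_subset[OF assms]) auto
  then have "integrable torus_measure (\<lambda>x. (cmod (f x))\<^sup>2)"
    unfolding torus_def by (rule continuous_imp_integrable)
  then show ?thesis
    unfolding L2T_def using borel_measurable_torus_continuous[OF assms] by blast
qed

lemma inW2inf_add: "inW2inf f \<Longrightarrow> inW2inf g \<Longrightarrow> inW2inf (\<lambda>x. f x + g x)"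
  by (simp add: inW2inf_iff L2T_add fourier_add L2T_imp_integrable)

lemma inW2inf_cmult: "inW2inf f \<Longrightarrow> inW2inf (\<lambda>x. c * f x)"
  by (simp add: inW2inf_iff L2T_cmult fourier_cmult)

lemma fourier_trig_poly:
  fixes a :: "int^'d::finite \<Rightarrow> complex"
  assumes "finite S"
  shows "fourier (\<lambda>x. \<Sum>l\<in>S. a l * torus_char l x) k = (if k \<in> S then a k else 0)"
proof -
  have integrable: "integrable torus_measure (torus_char l)" for l :: "int^'d"
    using integrable_mult_torus_char[OF finite_measure.integrable_const[OF finite_measure_torus, of 1]]
    by simp
  have "(LINT x|torus_measure. (\<Sum>l\<in>S. a l * torus_char l x) * torus_char (-k) x) =
        (LINT x|torus_measure. (\<Sum>l\<in>S. a l * torus_char (l - k) x))"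
    by (simp add: sum_distrib_right mult.assoc flip: torus_char_add)
  also have "\<dots> = (\<Sum>l\<in>S. a l * (LINT x|torus_measure. torus_char (l - k) x))"
    by (subst Bochner_Integration.integral_sum) (auto intro: integrable)
  also have "\<dots> = (\<Sum>l\<in>S. if l = k then a l * (2*pi)^CARD('d) else 0)"
    by (intro sum.cong refl) (simp add: integral_torus_char)
  finally show ?thesis
    using assms by (simp add: fourier_conv_torus_char sum.delta')
qed

lemma lowfreq_trig_poly_exists:
  fixes a :: "int^'d::finite \<Rightarrow> complex"
  shows "\<exists>f. inW2inf f \<and> (\<forall>k\<in>lowfreq. fourier f k = a k)"
proof (intro exI conjI)
  let ?f = "\<lambda>x. \<Sum>l\<in>lowfreq. a l * torus_char l x"
  show "inW2inf ?f"
    unfolding inW2inf_iff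
    by (auto intro!: L2T_continuous continuous_intros simp: fourier_trig_poly)
  show "\<forall>k\<in>lowfreq. fourier ?f k = a k"
    by (simp add: fourier_trig_poly)
qed

section \<open>Functions whose box integrals vanish\<close>

lemma UN_box_scaleR_One: "(\<Union>n. box (- (real n *\<^sub>R One)) (real n *\<^sub>R One)) = (UNIV :: 'a::euclidean_space set)"
proof -
  have box: "x \<in> box (- (real n *\<^sub>R One)) (real n *\<^sub>R One)" if "norm x < real n" for x :: 'a and n
    unfolding mem_box
  proof
    fix i :: 'a assume i: "i \<in> Basis"
    have "One \<bullet> i = 1"
      using i by (simp add: inner_sum_left inner_Basis)
    moreover have "\<bar>x \<bullet> i\<bar> < real n"
      using Basis_le_norm[OF i, of x] that by linarith
    ultimately show "- (real n *\<^sub>R One) \<bullet> i < x \<bullet> i \<and> x \<bullet> i < real n *\<^sub>R One \<bullet> i"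
      by (simp add: inner_minus_left abs_less_iff)
  qed
  have "x \<in> (\<Union>n. box (- (real n *\<^sub>R One)) (real n *\<^sub>R One))" for x :: 'a
  proof -
    obtain n where "norm x < real n"
      using reals_Archimedean2 by blast
    then show ?thesis
      using box by blast
  qed
  then show ?thesis
    by blast
qed

lemma integral_eq_0_if_box_integrals_eq_0:
  fixes h :: "'a::euclidean_space \<Rightarrow> 'b::{banach, second_countable_topology}"
  assumes h: "integrable lebesgue h" and box: "\<And>a b. (LINT x:box a b|lebesgue. h x) = 0"
  shows "(LINT x|lebesgue. h x) = 0"
proof -
  let ?B = "\<lambda>n. box (- (real n *\<^sub>R One)) (real n *\<^sub>R One) :: 'a set"
  have "incseq ?B"
    by (auto simp: incseq_def subset_box inner_simps intro!: mult_right_mono)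
  then have "(\<lambda>n. LINT x:?B n|lebesgue. h x) \<longlonglongrightarrow> (LINT x:(\<Union>n. ?B n)|lebesgue. h x)"
    using h by (intro set_integral_cont_up) (auto simp: set_integrable_def integrable_mult_indicator)
  then have "(\<lambda>n. 0) \<longlonglongrightarrow> (LINT x:UNIV|lebesgue. h x)"
    by (simp add: box UN_box_scaleR_One)
  then show ?thesis
    by (simp add: LIMSEQ_const_iff set_lebesgue_integral_def)
qed

lemma set_integral_borel_eq_0_if_box_integrals_eq_0:
  fixes h :: "'a::euclidean_space \<Rightarrow> 'b::{banach, second_countable_topology}"
  assumes h: "integrable lebesgue h" and box: "\<And>a b. (LINT x:box a b|lebesgue. h x) = 0"
    and A: "A \<in> sets borel"
  shows "(LINT x:A|lebesgue. h x) = 0"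
proof -
  let ?G = "range (\<lambda>(a, b). box a b :: 'a set)"
  have sets_borel: "sets borel = sigma_sets UNIV ?G"
    by (subst borel_eq_box) (simp add: sets_measure_of)
  have set_integrable: "set_integrable lebesgue A h" if "A \<in> sigma_sets UNIV ?G" for A
    using that h unfolding sets_borel[symmetric] set_integrable_def
    by (auto intro: integrable_mult_indicator)
  have "Int_stable ?G"
    by (auto simp: Int_stable_def box_Int_box)
  moreover have "?G \<subseteq> Pow UNIV"
    by simp
  moreover have "A \<in> sigma_sets UNIV ?G"
    using A sets_borel by simp
  ultimately show ?thesis
  proof (induction rule: sigma_sets_induct_disjoint)
    case (compl A)
    have "(LINT x:UNIV - A|lebesgue. h x) = (LINT x|lebesgue. h x - indicator A x *\<^sub>R h x)"
      unfolding set_lebesgue_integral_def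
      by (intro Bochner_Integration.integral_cong) (auto simp: indicator_def)
    also have "\<dots> = (LINT x|lebesgue. h x) - (LINT x:A|lebesgue. h x)"
      unfolding set_lebesgue_integral_def using set_integrable[OF compl(1)] h
      by (intro Bochner_Integration.integral_diff) (auto simp: set_integrable_def)
    finally have "(LINT x:UNIV - A|lebesgue. h x) = (LINT x|lebesgue. h x) - (LINT x:A|lebesgue. h x)" .
    then show ?case
      using compl integral_eq_0_if_box_integrals_eq_0[OF h box] by simp
  next
    case (union A)
    then have "(LINT x:(\<Union>i. A i)|lebesgue. h x) = (\<Sum>i. LINT x:A i|lebesgue. h x)"
      by (intro lebesgue_integral_countable_add set_integrable sigma_sets.Union)
         (auto simp: disjoint_family_on_def sets_borel[symmetric])
    then show ?case
      using union by simp
  qed (use box in \<open>auto simp: set_lebesgue_integral_def\<close>)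
qed

lemma set_integral_eq_0_if_box_integrals_eq_0:
  fixes h :: "'a::euclidean_space \<Rightarrow> 'b::{banach, second_countable_topology}"
  assumes h: "integrable lebesgue h" and box: "\<And>a b. (LINT x:box a b|lebesgue. h x) = 0"
    and A: "A \<in> sets lebesgue"
  shows "(LINT x:A|lebesgue. h x) = 0"
proof -
  obtain S N N' where SN: "A = S \<union> N" "N \<subseteq> N'" "N' \<in> null_sets lborel" "S \<in> sets borel"
    using A by (auto elim: sets_completionE)
  have S: "S \<in> sets lebesgue"
    using SN(4) by simp
  have "AE x in lebesgue. x \<notin> N'"
    using SN(3) by (intro AE_completion AE_not_in)
  then have "AE x in lebesgue. indicator A x *\<^sub>R h x = indicator S x *\<^sub>R h x"
    by eventually_elim (use SN in \<open>auto simp: indicator_def\<close>)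
  then have "(LINT x:A|lebesgue. h x) = (LINT x:S|lebesgue. h x)"
    unfolding set_lebesgue_integral_def
    by (intro integral_cong_AE) (use A S h in \<open>auto intro: borel_measurable_integrable integrable_mult_indicator\<close>)
  also have "\<dots> = 0"
    using set_integral_borel_eq_0_if_box_integrals_eq_0[OF h box SN(4)] .
  finally show ?thesis .
qed

lemma AE_lebesgue_on_eq_0_if_box_integrals_eq_0:
  fixes h :: "'a::euclidean_space \<Rightarrow> 'b::{banach, second_countable_topology}"
  assumes S: "S \<in> lmeasurable" and h: "integrable (lebesgue_on S) h"
    and box: "\<And>a b. (LINT x:box a b|lebesgue_on S. h x) = 0"
  shows "AE x in lebesgue_on S. h x = 0"
proof -
  interpret finite_measure "lebesgue_on S"
    using S by (rule finite_measure_lebesgue_on)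
  have S_sets: "S \<in> sets lebesgue"
    using S by (rule fmeasurableD)
  let ?h = "\<lambda>x. indicator S x *\<^sub>R h x"
  have restrict: "(LINT x:A|lebesgue_on S. h x) = (LINT x:A|lebesgue. ?h x)" for A
    using S_sets by (simp add: set_lebesgue_integral_def integral_restrict_space mult.commute)
  have "integrable lebesgue ?h"
    using h S_sets by (simp add: integrable_restrict_space)
  moreover have "(LINT x:box a b|lebesgue. ?h x) = 0" for a b
    using box[of a b] by (simp add: restrict)
  ultimately have zero: "(LINT x:A|lebesgue. ?h x) = 0" if "A \<in> sets lebesgue" for A
    using that by (rule set_integral_eq_0_if_box_integrals_eq_0)
  show ?thesis
  proof (rule density_zero[OF h])
    fix A assume "A \<in> sets (lebesgue_on S)"
    then obtain B where "B \<in> sets lebesgue" "A = S \<inter> B"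
      by (auto simp: sets_restrict_space)
    then show "(LINT x:A|lebesgue_on S. h x) = 0"
      using S_sets by (simp add: restrict zero)
  qed
qed

section \<open>Uniqueness of Fourier coefficients\<close>

inductive_set trig_poly :: "(real^'d::finite \<Rightarrow> complex) set" where
  torus_char: "torus_char k \<in> trig_poly"
| add: "p \<in> trig_poly \<Longrightarrow> q \<in> trig_poly \<Longrightarrow> (\<lambda>x. p x + q x) \<in> trig_poly"
| cmult: "p \<in> trig_poly \<Longrightarrow> (\<lambda>x. c * p x) \<in> trig_poly"

lemma trig_poly_const: "(\<lambda>x. c) \<in> trig_poly"
  using trig_poly.cmult[OF trig_poly.torus_char[of 0], of c] by simp

lemma trig_poly_continuous: "p \<in> trig_poly \<Longrightarrow> continuous_on UNIV p"
  by (induction rule: trig_poly.induct) (auto intro: continuous_intros)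

lemma trig_poly_bounded: "p \<in> trig_poly \<Longrightarrow> \<exists>B. \<forall>x. norm (p x) \<le> B"
proof (induction rule: trig_poly.induct)
  case (add p q)
  then obtain B1 B2 where "\<forall>x. norm (p x) \<le> B1" "\<forall>x. norm (q x) \<le> B2" by auto
  then have "\<forall>x. norm (p x + q x) \<le> B1 + B2" by (meson add_mono norm_triangle_le)
  then show ?case by blast
next
  case (cmult p c)
  then obtain B where "\<forall>x. norm (p x) \<le> B" by auto
  then have "\<forall>x. norm (c * p x) \<le> norm c * B" by (simp add: norm_mult mult_left_mono)
  then show ?case by blast
qed auto

lemma trig_poly_mult_torus_char: "p \<in> trig_poly \<Longrightarrow> (\<lambda>x. p x * torus_char l x) \<in> trig_poly"
proof (induction rule: trig_poly.induct)
  case (torus_char k)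
  then show ?case using trig_poly.torus_char[of "k + l"] by (simp add: torus_char_add[abs_def])
next
  case (add p q)
  then show ?case using trig_poly.add[OF add.IH] by (simp add: distrib_right)
next
  case (cmult p c)
  then show ?case using trig_poly.cmult[OF cmult.IH, of c] by (simp add: mult.assoc)
qed

lemma trig_poly_mult:
  assumes "p \<in> trig_poly" "q \<in> trig_poly"
  shows "(\<lambda>x. p x * q x) \<in> trig_poly"
  using assms(2)
proof (induction rule: trig_poly.induct)
  case (torus_char k)
  then show ?case using assms(1) by (rule trig_poly_mult_torus_char)
next
  case (add q1 q2)
  then show ?case using trig_poly.add[OF add.IH] by (simp add: distrib_left)
next
  case (cmult q c)
  then show ?case using trig_poly.cmult[OF cmult.IH, of c] by (simp add: mult_ac)
qed

lemma trig_poly_sum: "finite S \<Longrightarrow> (\<And>i. i \<in> S \<Longrightarrow> f i \<in> trig_poly) \<Longrightarrow> (\<lambda>x. \<Sum>i\<in>S. f i x) \<in> trig_poly"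
  by (induction S rule: finite_induct) (auto intro: trig_poly_const[of 0, simplified] trig_poly.add)

lemma trig_poly_cos: "(\<lambda>x. complex_of_real (cos (x $ j - \<mu>))) \<in> trig_poly"
proof -
  have "complex_of_real (cos (x $ j - \<mu>)) =
        exp (- \<i> * of_real \<mu>) / 2 * torus_char (axis j 1) x + exp (\<i> * of_real \<mu>) / 2 * torus_char (- axis j 1) x"
    for x
    by (simp add: cos_of_real[symmetric] cos_exp_eq torus_char_def dotk_axis dotk_uminus
        add_divide_distrib algebra_simps flip: exp_add)
  moreover have "(\<lambda>x. exp (- \<i> * of_real \<mu>) / 2 * torus_char (axis j 1) x +
      exp (\<i> * of_real \<mu>) / 2 * torus_char (- axis j 1) x) \<in> trig_poly"
    by (intro trig_poly.add trig_poly.cmult trig_poly.torus_char)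
  ultimately show ?thesis by simp
qed

lemma linear_eq_sum_axis:
  fixes f :: "real^'n \<Rightarrow> real"
  assumes "linear f"
  shows "f y = (\<Sum>j\<in>UNIV. y $ j * f (axis j 1))"
proof -
  have "f y = f (\<Sum>j\<in>UNIV. y $ j *\<^sub>R axis j 1)"
    using basis_expansion[of y] by (simp add: scalar_mult_eq_scaleR)
  also have "\<dots> = (\<Sum>j\<in>UNIV. y $ j * f (axis j 1))"
    using assms by (simp add: linear_sum linear_scale)
  finally show ?thesis .
qed

lemma trig_poly_polynomial_cos:
  fixes \<mu> :: "real^'d::finite"
  assumes "real_polynomial_function P"
  shows "(\<lambda>x. complex_of_real (P (\<chi> j. cos (x $ j - \<mu> $ j)))) \<in> trig_poly"
  using assms
proof (induction rule: real_polynomial_function.induct)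
  case (linear f)
  then have "(\<lambda>x. \<Sum>j\<in>UNIV. complex_of_real (f (axis j 1)) * complex_of_real (cos (x $ j - \<mu> $ j))) \<in> trig_poly"
    by (intro trig_poly_sum trig_poly.cmult trig_poly_cos) auto
  moreover have "f (\<chi> j. cos (x $ j - \<mu> $ j)) = (\<Sum>j\<in>UNIV. cos (x $ j - \<mu> $ j) * f (axis j 1))" for x
    by (rule linear_eq_sum_axis[OF bounded_linear.linear[OF linear], THEN trans]) simp
  ultimately show ?case
    by (simp add: mult.commute)
next
  case (add f g)
  then show ?case using trig_poly.add[OF add.IH] by simp
next
  case (mult f g)
  then show ?case using trig_poly_mult[OF mult.IH] by simp
qed (rule trig_poly_const)

lemma integrable_mult_continuous_comp:
  fixes h :: "'a \<Rightarrow> complex" and C :: "'a \<Rightarrow> 'b::euclidean_space" and G :: "'b \<Rightarrow> real"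
  assumes h: "integrable M h" and K: "compact K" and G: "continuous_on UNIV G"
    and C: "C \<in> borel_measurable M" "\<And>x. C x \<in> K"
  shows "integrable M (\<lambda>x. h x * of_real (G (C x)))"
proof -
  obtain B where "\<And>y. y \<in> K \<Longrightarrow> norm (G y) \<le> B"
    using compact_imp_bounded[OF compact_continuous_image[OF continuous_on_subset[OF G] K]]
    by (auto simp: bounded_iff)
  moreover have "(\<lambda>x. G (C x)) \<in> borel_measurable M"
    using C(1) borel_measurable_continuous_onI[OF G] by (rule measurable_compose)
  ultimately show ?thesis
    using C(2) by (intro integrable_mult_bounded[OF h, where B=B]) auto
qed

lemma integral_mult_comp_eq_0_if_polynomials:
  fixes h :: "'a \<Rightarrow> complex" and C :: "'a \<Rightarrow> 'b::euclidean_space" and F :: "'b \<Rightarrow> real"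
  assumes h: "integrable M h" and K: "compact K" and F: "continuous_on UNIV F"
    and C: "C \<in> borel_measurable M" "\<And>x. C x \<in> K"
    and poly: "\<And>P. real_polynomial_function P \<Longrightarrow> (LINT x|M. h x * of_real (P (C x))) = 0"
  shows "(LINT x|M. h x * of_real (F (C x))) = 0"
proof -
  note integrable = integrable_mult_continuous_comp[OF h K _ C]
  define A where "A = (LINT x|M. norm (h x))"
  have "A \<ge> 0"
    unfolding A_def by simp
  let ?I = "LINT x|M. h x * of_real (F (C x))"
  have "norm ?I \<le> 0 + e" if e: "e > 0" for e
  proof -
    obtain P where P: "polynomial_function P" "\<And>y. y \<in> K \<Longrightarrow> norm (F y - P y) < e / (A + 1)"
      using Stone_Weierstrass_polynomial_function[OF K continuous_on_subset[OF F], of "e / (A + 1)"] e \<open>A \<ge> 0\<close>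
      by auto
    have P_cont: "continuous_on UNIV P"
      using P(1) by (rule continuous_on_polymonial_function)
    have int_diff: "integrable M (\<lambda>x. h x * of_real (F (C x) - P (C x)))"
      using integrable[OF continuous_on_diff[OF F P_cont]] by simp
    have "?I = ?I - (LINT x|M. h x * of_real (P (C x)))"
      using P(1) by (simp add: poly real_polynomial_function_eq)
    also have "\<dots> = (LINT x|M. h x * of_real (F (C x) - P (C x)))"
      unfolding of_real_diff right_diff_distrib
      by (rule Bochner_Integration.integral_diff[symmetric, OF integrable[OF F] integrable[OF P_cont]])
    also have "norm \<dots> \<le> (LINT x|M. norm (h x * of_real (F (C x) - P (C x))))"
      by (rule integral_norm_bound)
    also have "\<dots> \<le> (LINT x|M. norm (h x) * (e / (A + 1)))"
    proof (rule integral_mono)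
      show "integrable M (\<lambda>x. norm (h x * of_real (F (C x) - P (C x))))"
        using int_diff by (rule integrable_norm)
      show "integrable M (\<lambda>x. norm (h x) * (e / (A + 1)))"
        using h by (intro integrable_mult_left integrable_norm)
      show "norm (h x * of_real (F (C x) - P (C x))) \<le> norm (h x) * (e / (A + 1))" for x
        using P(2)[OF C(2)] unfolding norm_mult norm_of_real by (intro mult_left_mono) (auto simp: less_imp_le)
    qed
    also have "\<dots> = e * (A / (A + 1))"
      by (simp add: A_def)
    also have "\<dots> \<le> e"
      using \<open>A \<ge> 0\<close> e by (intro mult_left_le) auto
    finally show ?thesis by simp
  qed
  then have "norm ?I \<le> 0"
    by (rule field_le_epsilon)
  then show ?thesis
    by simp
qed

lemma cos_less_cos_iff_abs_less:
  assumes "0 < r" "r \<le> pi" "\<bar>\<theta>\<bar> \<le> 2 * pi - r"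
  shows "cos r < cos \<theta> \<longleftrightarrow> \<bar>\<theta>\<bar> < r"
proof
  assume less: "cos r < cos \<theta>"
  show "\<bar>\<theta>\<bar> < r"
  proof (rule ccontr)
    assume "\<not> \<bar>\<theta>\<bar> < r"
    have "cos \<bar>\<theta>\<bar> \<le> cos r"
    proof (cases "\<bar>\<theta>\<bar> \<le> pi")
      case True
      then show ?thesis
        using \<open>\<not> \<bar>\<theta>\<bar> < r\<close> assms by (intro cos_monotone_0_pi_le) auto
    next
      case False
      have "cos \<bar>\<theta>\<bar> = cos (2 * pi - \<bar>\<theta>\<bar>)"
        by (simp add: cos_2pi_minus)
      also have "\<dots> \<le> cos r"
        using False assms by (intro cos_monotone_0_pi_le) auto
      finally show ?thesis .
    qed
    with less show False
      by simp
  qed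
next
  assume "\<bar>\<theta>\<bar> < r"
  then have "cos r < cos \<bar>\<theta>\<bar>"
    using assms by (intro cos_monotone_0_pi) auto
  then show "cos r < cos \<theta>"
    by simp
qed

definition ramp :: "nat \<Rightarrow> real \<Rightarrow> real" where
  "ramp n s = min 1 (max 0 (real n * s))"

lemma continuous_on_ramp [continuous_intros]:
  "continuous_on S f \<Longrightarrow> continuous_on S (\<lambda>x. ramp n (f x))"
  unfolding ramp_def by (intro continuous_intros)

lemma ramp_bounds: "0 \<le> ramp n s" "ramp n s \<le> 1"
  by (auto simp: ramp_def)

lemma eventually_ramp_eq: "eventually (\<lambda>n. ramp n s = (if s > 0 then 1 else 0)) sequentially"
proof (cases "s > 0")
  case True
  have "ramp n s = 1" if "n \<ge> nat \<lceil>1 / s\<rceil>" for n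
  proof -
    have "1 / s \<le> real n"
      using that by linarith
    then have "1 \<le> real n * s"
      using True by (simp add: field_simps)
    then show ?thesis
      by (simp add: ramp_def)
  qed
  then show ?thesis
    using True unfolding eventually_sequentially by (intro exI[of _ "nat \<lceil>1 / s\<rceil>"]) auto
next
  case False
  then have "real n * s \<le> 0" for n
    by (simp add: mult_nonneg_nonpos)
  then show ?thesis
    using False by (simp add: ramp_def max_absorb1)
qed

(* Since x_j and the box stay inside [0, 2 pi], cos (x_j - mu_j) > cos r_j exactly when x_j lies
   within the half-width r_j of the midpoint mu_j; periodicity of the cosine would break this for
   boxes leaving the cube. *)
lemma eventually_prod_ramp_eq_indicator_box:
  fixes c e x :: "real^'d::finite"
  assumes c: "\<And>j. 0 \<le> c $ j" and ce: "\<And>j. c $ j < e $ j" and e: "\<And>j. e $ j \<le> 2 * pi"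
    and x: "x \<in> torus"
  shows "eventually (\<lambda>n. (\<Prod>j\<in>UNIV. ramp n (cos (x $ j - (c $ j + e $ j) / 2) - cos ((e $ j - c $ j) / 2)))
           = indicator (box c e) x) sequentially"
proof -
  define s where "s j = cos (x $ j - (c $ j + e $ j) / 2) - cos ((e $ j - c $ j) / 2)" for j
  have pos_iff: "s j > 0 \<longleftrightarrow> c $ j < x $ j \<and> x $ j < e $ j" for j
  proof -
    have "0 \<le> x $ j" "x $ j \<le> 2 * pi"
      using x by (auto simp: mem_torus_iff)
    then have "s j > 0 \<longleftrightarrow> \<bar>x $ j - (c $ j + e $ j) / 2\<bar> < (e $ j - c $ j) / 2"
      unfolding s_def using c[of j] ce[of j] e[of j]
      by (subst cos_less_cos_iff_abs_less[symmetric]) (auto simp: abs_le_iff field_simps)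
    also have "\<dots> \<longleftrightarrow> c $ j < x $ j \<and> x $ j < e $ j"
      unfolding abs_less_iff by argo
    finally show ?thesis .
  qed
  have "eventually (\<lambda>n. \<forall>j\<in>UNIV. ramp n (s j) = (if s j > 0 then 1 else 0)) sequentially"
    by (intro eventually_ball_finite ballI eventually_ramp_eq) simp
  then show ?thesis
  proof (rule eventually_mono)
    fix n assume "\<forall>j\<in>UNIV. ramp n (s j) = (if s j > 0 then 1 else 0)"
    then have "(\<Prod>j\<in>UNIV. ramp n (s j)) = (\<Prod>j\<in>UNIV. if s j > 0 then 1 else 0)"
      by simp
    also have "\<dots> = indicator (box c e) x"
    proof (cases "x \<in> box c e")
      case False
      then obtain j where "\<not> s j > 0"
        by (auto simp: mem_box_cart pos_iff)
      then have "(\<Prod>j\<in>UNIV. if s j > 0 then 1 else 0) = (0::real)"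
        by (intro prod_zero bexI[of _ j]) simp_all
      then show ?thesis
        using False by simp
    qed (simp add: mem_box_cart pos_iff)
    finally show "(\<Prod>j\<in>UNIV. ramp n (cos (x $ j - (c $ j + e $ j) / 2) - cos ((e $ j - c $ j) / 2)))
        = indicator (box c e) x"
      by (simp add: s_def)
  qed
qed

lemma AE_torus_in_box: "AE x in torus_measure. x \<in> box 0 (\<chi> j. 2 * pi :: real^'d::finite)"
proof -
  have "(cbox 0 (\<chi> j. 2 * pi) - box 0 (\<chi> j. 2 * pi) :: (real^'d) set) \<in> null_sets lebesgue"
    using negligible_frontier_interval negligible_iff_null_sets by blast
  then have "AE x in lebesgue. x \<in> torus \<longrightarrow> x \<in> box 0 (\<chi> j. 2 * pi :: real^'d)"
    by (rule AE_not_in[THEN eventually_mono]) (auto simp: torus_def)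
  then show ?thesis
    by (subst AE_restrict_space_iff) simp_all
qed

context
  fixes h :: "real^'d::finite \<Rightarrow> complex"
  assumes h: "integrable torus_measure h"
    and orthogonal: "\<And>k. (LINT x|torus_measure. h x * torus_char k x) = 0"
begin

lemma integrable_mult_trig_poly: "p \<in> trig_poly \<Longrightarrow> integrable torus_measure (\<lambda>x. h x * p x)"
  using trig_poly_bounded[of p]
  by (auto intro!: integrable_mult_bounded[OF h] borel_measurable_torus_continuous trig_poly_continuous)

lemma integral_mult_trig_poly_eq_0: "p \<in> trig_poly \<Longrightarrow> (LINT x|torus_measure. h x * p x) = 0"
proof (induction rule: trig_poly.induct)
  case (torus_char k)
  then show ?case by (rule orthogonal)
next
  case (add p q)
  then have "(LINT x|torus_measure. h x * (p x + q x)) =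
      (LINT x|torus_measure. h x * p x) + (LINT x|torus_measure. h x * q x)"
    unfolding distrib_left by (intro Bochner_Integration.integral_add integrable_mult_trig_poly)
  with add show ?case by simp
next
  case (cmult p c)
  have "(LINT x|torus_measure. h x * (c * p x)) = c * (LINT x|torus_measure. h x * p x)"
    by (simp add: mult_ac)
  with cmult show ?case by simp
qed

lemma integral_mult_continuous_cos_eq_0:
  fixes \<mu> :: "real^'d"
  assumes F: "continuous_on UNIV F"
  shows "(LINT x|torus_measure. h x * of_real (F (\<chi> j. cos (x $ j - \<mu> $ j)))) = 0"
proof (rule integral_mult_comp_eq_0_if_polynomials[OF h compact_cbox F])
  show "(\<lambda>x. \<chi> j. cos (x $ j - \<mu> $ j)) \<in> borel_measurable torus_measure"
    by (intro borel_measurable_torus_continuous continuous_on_vec_lambda continuous_intros)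
  show "(\<chi> j. cos (x $ j - \<mu> $ j)) \<in> cbox (- 1) 1" for x
    by (simp add: mem_box_cart)
  show "(LINT x|torus_measure. h x * of_real (P (\<chi> j. cos (x $ j - \<mu> $ j)))) = 0"
    if "real_polynomial_function P" for P
    using that by (intro integral_mult_trig_poly_eq_0 trig_poly_polynomial_cos)
qed

lemma set_integral_box_in_torus_eq_0:
  fixes c e :: "real^'d"
  assumes c: "\<And>j. 0 \<le> c $ j" and ce: "\<And>j. c $ j < e $ j" and e: "\<And>j. e $ j \<le> 2 * pi"
  shows "(LINT x:box c e|torus_measure. h x) = 0"
proof -
  define C where "C x = (\<chi> j. cos (x $ j - (c $ j + e $ j) / 2))" for x :: "real^'d"
  define F where "F n y = (\<Prod>j\<in>UNIV. ramp n (y $ j - cos ((e $ j - c $ j) / 2)))" for n and y :: "real^'d"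
  have C_cont: "continuous_on UNIV C"
    unfolding C_def by (intro continuous_on_vec_lambda continuous_intros)
  have F_cont: "continuous_on UNIV (F n)" for n
    unfolding F_def by (intro continuous_intros)
  have F_bounds: "0 \<le> F n y" "F n y \<le> 1" for n y
    unfolding F_def using ramp_bounds by (auto intro: prod_nonneg prod_le_1)
  have zero: "(LINT x|torus_measure. h x * of_real (F n (C x))) = 0" for n
    using integral_mult_continuous_cos_eq_0[OF F_cont, where \<mu>="\<chi> j. (c $ j + e $ j) / 2"]
    by (simp add: C_def)
  have "(\<lambda>n. LINT x|torus_measure. h x * of_real (F n (C x))) \<longlonglongrightarrow> (LINT x:box c e|torus_measure. h x)"
    unfolding set_lebesgue_integral_def
  proof (rule integral_dominated_convergence[where w="\<lambda>x. norm (h x)"])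
    show "(\<lambda>x. indicator (box c e) x *\<^sub>R h x) \<in> borel_measurable torus_measure"
      by (intro borel_measurable_indicator_scaleR_lebesgue_on borel_measurable_integrable[OF h]) auto
    show "(\<lambda>x. h x * of_real (F n (C x))) \<in> borel_measurable torus_measure" for n
      using h by (intro borel_measurable_times borel_measurable_integrable borel_measurable_torus_continuous
          continuous_intros continuous_on_compose2[OF F_cont C_cont]) auto
    show "integrable torus_measure (\<lambda>x. norm (h x))"
      using h by (rule integrable_norm)
    show "AE x in torus_measure. norm (h x * of_real (F n (C x))) \<le> norm (h x)" for n
      using F_bounds[of n] by (intro AE_I2) (simp add: norm_mult mult_left_le)
    show "AE x in torus_measure. (\<lambda>n. h x * of_real (F n (C x))) \<longlonglongrightarrow> indicator (box c e) x *\<^sub>R h x"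
    proof (rule AE_I2)
      fix x :: "real^'d" assume "x \<in> space torus_measure"
      then have "eventually (\<lambda>n. F n (C x) = indicator (box c e) x) sequentially"
        unfolding F_def C_def using eventually_prod_ramp_eq_indicator_box[OF c ce e] by simp
      then show "(\<lambda>n. h x * of_real (F n (C x))) \<longlonglongrightarrow> indicator (box c e) x *\<^sub>R h x"
        by (rule tendsto_eventually[OF eventually_mono]) (simp add: scaleR_conv_of_real mult.commute)
    qed
  qed
  then show ?thesis
    by (simp add: zero LIMSEQ_const_iff)
qed

lemma set_integral_box_torus_eq_0: "(LINT x:box a b|torus_measure. h x) = 0"
proof -
  define c :: "real^'d" where "c = (\<chi> j. max (a $ j) 0)"
  define e :: "real^'d" where "e = (\<chi> j. min (b $ j) (2 * pi))"
  have "(LINT x:box a b|torus_measure. h x) = (LINT x:box c e|torus_measure. h x)"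
    unfolding set_lebesgue_integral_def
  proof (rule integral_cong_AE)
    show "(\<lambda>x. indicator (box a b) x *\<^sub>R h x) \<in> borel_measurable torus_measure"
      by (intro borel_measurable_indicator_scaleR_lebesgue_on borel_measurable_integrable[OF h]) auto
    show "(\<lambda>x. indicator (box c e) x *\<^sub>R h x) \<in> borel_measurable torus_measure"
      by (intro borel_measurable_indicator_scaleR_lebesgue_on borel_measurable_integrable[OF h]) auto
    show "AE x in torus_measure. indicator (box a b) x *\<^sub>R h x = indicator (box c e) x *\<^sub>R h x"
      using AE_torus_in_box
      by eventually_elim (auto simp: mem_box_cart c_def e_def indicator_def)
  qed
  also have "\<dots> = 0"
  proof (cases "\<forall>j. c $ j < e $ j")
    case True
    then show ?thesis
      by (intro set_integral_box_in_torus_eq_0) (auto simp: c_def e_def)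
  next
    case False
    then obtain j where "e $ j \<le> c $ j"
      by (auto simp: not_less)
    then have "box c e = {}"
      by (auto simp: mem_box_cart dest!: spec[of _ j])
    then show ?thesis
      by (simp add: set_lebesgue_integral_def)
  qed
  finally show ?thesis .
qed

end

lemma fourier_eq_0_imp_AE_eq_0:
  fixes h :: "real^'d::finite \<Rightarrow> complex"
  assumes h: "integrable torus_measure h" and fourier: "\<And>k. fourier h k = 0"
  shows "AE x in torus_measure. h x = 0"
proof (rule AE_lebesgue_on_eq_0_if_box_integrals_eq_0[OF torus_lmeasurable h])
  have "(LINT x|torus_measure. h x * torus_char k x) = 0" for k
    using fourier[of "- k"] by (simp add: fourier_conv_torus_char)
  then show "(LINT x:box a b|torus_measure. h x) = 0" for a b
    by (rule set_integral_box_torus_eq_0[OF h])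
qed

lemma inW2inf_fourier_eq_iff_AE_eq:
  assumes f: "inW2inf f" and g: "inW2inf g"
  shows "(\<forall>k\<in>lowfreq. fourier f k = fourier g k) \<longleftrightarrow> (AE x in torus_measure. f x = g x)"
proof
  assume low: "\<forall>k\<in>lowfreq. fourier f k = fourier g k"
  have integrable: "integrable torus_measure f" "integrable torus_measure g"
    using f g by (auto simp: inW2inf_iff intro: L2T_imp_integrable)
  have "AE x in torus_measure. f x - g x = 0"
  proof (rule fourier_eq_0_imp_AE_eq_0)
    show "integrable torus_measure (\<lambda>x. f x - g x)"
      using integrable by (rule Bochner_Integration.integrable_diff)
    show "fourier (\<lambda>x. f x - g x) k = 0" for k
      using low f g by (cases "k \<in> lowfreq") (auto simp: fourier_diff[OF integrable] inW2inf_iff)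
  qed
  then show "AE x in torus_measure. f x = g x"
    by eventually_elim simp
next
  assume "AE x in torus_measure. f x = g x"
  then show "\<forall>k\<in>lowfreq. fourier f k = fourier g k"
    using f g by (auto simp: inW2inf_iff intro: fourier_cong_AE)
qed

theorem mainTheorem10:
  shows "(\<forall>f :: real^'d::finite \<Rightarrow> complex. inW2inf f \<longrightarrow>
            (\<forall>k. (\<exists>i. \<bar>k $ i\<bar> \<ge> 2) \<longrightarrow> fourier f k = 0) \<and>
            (SUP m\<in>(posidx :: (nat^'d) set). sob_norm m f) ^ 2 =
              (\<Sum>k\<in>lowfreq. (1 + (\<Sum>j\<in>UNIV. real_of_int \<bar>k $ j\<bar>)) * (cmod (fourier f k))^2))
        \<and> (\<forall>f g :: real^'d \<Rightarrow> complex. \<forall>c :: complex.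
            inW2inf f \<longrightarrow> inW2inf g \<longrightarrow> inW2inf (\<lambda>x. f x + g x) \<and> inW2inf (\<lambda>x. c * f x))
        \<and> (\<forall>f g :: real^'d \<Rightarrow> complex. inW2inf f \<longrightarrow> inW2inf g \<longrightarrow>
            ((\<forall>k\<in>lowfreq. fourier f k = fourier g k) \<longleftrightarrow>
             (AE x in lebesgue_on torus. f x = g x)))
        \<and> (\<forall>a :: int^'d \<Rightarrow> complex. \<exists>f. inW2inf f \<and> (\<forall>k\<in>lowfreq. fourier f k = a k))
        \<and> card (lowfreq :: (int^'d) set) = 3 ^ CARD('d)"
proof (intro conjI allI impI)
  fix f :: "real^'d \<Rightarrow> complex"
  assume f: "inW2inf f"
  show "fourier f k = 0" if "\<exists>i. \<bar>k $ i\<bar> \<ge> 2" for k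
    using f that by (simp add: inW2inf_iff not_lowfreq_iff)
  show "(SUP m\<in>(posidx :: (nat^'d) set). sob_norm m f) ^ 2 =
      (\<Sum>k\<in>lowfreq. (1 + (\<Sum>j\<in>UNIV. real_of_int \<bar>k $ j\<bar>)) * (cmod (fourier f k))^2)"
    using SUP_sob_norm[OF f] by (simp add: lowfreq_energy_def)
qed (auto intro: inW2inf_add inW2inf_cmult lowfreq_trig_poly_exists card_lowfreq
    simp: inW2inf_fourier_eq_iff_AE_eq)

end
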